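(* Let $t<n$, let $\mathcal{E}$ be an information exchange and $P$ a decision protocol for the hard crash failures context $(\mathcal{E},\mathit{Crash}_t)$ such that SBA($\mathcal{N}$) is valid in $\mathcal{I}_{P,\mathcal{E},\mathit{Crash}_t}$. Then for every agent $i$ and value $v$, the formulas $\mathtt{decides}_i(v)\Rightarrow C_{\mathcal{A}}(\mathtt{decides}_{\mathcal{A}}(v))$ and $\mathtt{decides}_i(v)\Rightarrow C_{\mathcal{A}}(\exists v)$ are valid in $\mathcal{I}_{P,\mathcal{E},\mathit{Crash}_t}$.
   Context: Agents $\mathrm{Agt}=\{1,\dots,n\}$; decision values $V$; actions $A_i=\{\mathtt{noop}\}\cup\{\mathtt{decide}_i(v):v\in V\}$. An information exchange $\mathcal{E}$ gives each agent $i$ a tuple $(L_i,I_i,M_i,\mu_i,\delta_i)$: local states $L_i$ of the form $\langle\mathit{init}_i,\mathit{time}_i,\dots\rangle$ ($\mathit{init}_i\in V$ the initial preference) together with a distinguished state $\mathit{crashed}$; initial states $I_i\subseteq L_i$; messages $M_i\ni\bot$ ($\bot$ = no message); $\mu_i:L_i\times A_i\to(\mathrm{Agt}\to M_i)$; $\delta_i:L_i\times A_i\times\prod_jM_j\to L_i$, preserving $\mathit{init}_i$ and incrementing $\mathit{time}_i$. A decision protocol is $P=(P_i:L_i\to A_i)_i$; in the hard crash model $P_i(\mathit{crashed})=\mathtt{noop}$. A failure model $(L^*_e,I_e,\delta_e,\mathit{Adv})$ has environment states, initial ones, update $\delta_e:L^*_e\times\prod_iA_i\to L^*_e$, and adversaries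 $(\Delta^t,\Delta^r,\Delta^s)$ with $\Delta^t,\Delta^r:\mathbb{N}\times\mathrm{Agt}\times\mathrm{Agt}\times\bigcup_iM_i\to\bigcup_iM_i$, $\Delta^s_i:\mathbb{N}\times L_i\to L_i$. Runs $r$ of $\mathcal{I}_{P,\mathcal{E},\mathcal{F}}$: $r(0)=((s_e,\alpha),s_1,\dots,s_n)$ with $s_e\in I_e$, $\alpha\in\mathit{Adv}$, $s_i\in I_i$; from $r(k)=((s_e,\alpha),s_1,\dots,s_n)$, $r(k+1)=((\delta_e(s_e,(a_1,\dots,a_n)),\alpha),s'_1,\dots,s'_n)$ with $a_i=P_i(s_i)$ (action of $i$ at time $k$), $m_{i,j}=\mu_i(s_i,a_i)(j)$, $m'_{i,j}=\Delta^r(k,i,j,\Delta^t(k,i,j,m_{i,j}))$, $s^*_j=\delta_j(s_j,a_j,(m'_{1,j},\dots,m'_{n,j}))$, $s'_j=\Delta^s_j(k,s^*_j)$. $r_i(m)$ is $i$'s local state at time $m$. $\mathit{Crash}_t$: adversaries in which at most $t$ agents crash; $\Delta^r(k,i,j,m)=m$ always; an agent $i$ crashing in round $k+1$ has $\Delta^s_i(k',s)=\mathit{crashed}$ for all $s$ and $k'\ge k$, some $J\subseteq\mathrm{Agt}$ with $\Delta^t(k,i,j,m)=\bot$ for $j\in J$ and $=m$ for $j\notin J$, and $\Delta^t(k',i,j,m)=\bot$ for all $j$, $k'>k$; otherwise $\Delta^s_i$ and $\Delta^t(\cdot,i,\cdot,\cdot)$ act as identity. An agent has a fault in a round if its sent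 messages are altered by $\Delta^t$, its received messages altered by $\Delta^r$, or its updated state altered by $\Delta^s_i$. $\mathcal{N}(r,m)$ = agents with no fault in any round of $r$; $\mathcal{A}(r,m)$ = agents with no fault in rounds $1..m$. Formulas: $\mathtt{decides}_i(v)$ holds at $(r,m)$ iff $P_i(r_i(m))=\mathtt{decide}_i(v)$; $\exists v$ holds at $(r,m)$ iff some agent's $\mathit{init}$ in $r$ is $v$; $\mathtt{decides}_S(v):=\bigwedge_{i\in S}\mathtt{decides}_i(v)$. $(r,m)\sim_i(r',m')$ iff $r_i(m)=r'_i(m')$; $K_i\phi$ holds iff $\phi$ holds at all $\sim_i$-related points; for an indexical set $S$ (assignment of a set of agents to each point), $E_S\phi=\bigwedge_{i\in S}K_i\phi$ and $C_S\phi=\bigwedge_{k\ge1}E_S^k\phi$. SBA($S$) valid means in every run: each agent decides at most once; if $i\in S(r,m)$ performs $\mathtt{decide}_i(v)$ at time $m$ then every $j\in S(r,m)$ performs $\mathtt{decide}_j(v)$ at time $m$; and then some agent has initial preference $v$. *)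

theory Defs
  imports Main
begin

datatype ('v, 'x) lstate = Crashed | St (st_init: 'v) (st_time: nat) (st_rest: 'x)

(* Actions of agent i: noop or decide_i(v) (the agent index is implicit) *)
datatype 'v act = Noop | Decide 'v

(* Messages: 'm option, with None playing the role of bottom (no message) *)

definition agents :: "nat \<Rightarrow> nat set" where
  "agents n = {1..n}"

record ('v, 'x, 'm) info_exchange =
  Ls :: "nat \<Rightarrow> ('v, 'x) lstate set"
  Is :: "nat \<Rightarrow> ('v, 'x) lstate set"
  Ms :: "nat \<Rightarrow> 'm option set"
  mu :: "nat \<Rightarrow> ('v, 'x) lstate \<Rightarrow> 'v act \<Rightarrow> nat \<Rightarrow> 'm option"
  dl :: "nat \<Rightarrow> ('v, 'x) lstate \<Rightarrow> 'v act \<Rightarrow> (nat \<Rightarrow> 'm option) \<Rightarrow> ('v, 'x) lstate"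

definition wf_info_exchange :: "nat \<Rightarrow> ('v, 'x, 'm) info_exchange \<Rightarrow> bool" where
  "wf_info_exchange n E \<longleftrightarrow>
     (\<forall>i\<in>agents n.
        Crashed \<in> Ls E i \<and> Is E i \<subseteq> Ls E i \<and> None \<in> Ms E i \<and>
        (\<forall>s\<in>Ls E i. \<forall>a j. mu E i s a j \<in> Ms E i) \<and>
        (\<forall>s\<in>Ls E i. \<forall>a ms. (\<forall>j\<in>agents n. ms j \<in> Ms E j) \<longrightarrow> dl E i s a ms \<in> Ls E i) \<and>
        (\<forall>v tm x a ms. St v tm x \<in> Ls E i \<longrightarrow> (\<forall>j\<in>agents n. ms j \<in> Ms E j) \<longrightarrow>
            (\<exists>x'. dl E i (St v tm x) a ms = St v (Suc tm) x')))"

type_synonym ('v, 'x) protocol = "nat \<Rightarrow> ('v, 'x) lstate \<Rightarrow> 'v act"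

definition hard_crash_protocol :: "nat \<Rightarrow> ('v, 'x) protocol \<Rightarrow> bool" where
  "hard_crash_protocol n P \<longleftrightarrow> (\<forall>i\<in>agents n. P i Crashed = Noop)"

record ('v, 'x, 'm) adversary =
  Dt :: "nat \<Rightarrow> nat \<Rightarrow> nat \<Rightarrow> 'm option \<Rightarrow> 'm option"
  Dr :: "nat \<Rightarrow> nat \<Rightarrow> nat \<Rightarrow> 'm option \<Rightarrow> 'm option"
  Ds :: "nat \<Rightarrow> nat \<Rightarrow> ('v, 'x) lstate \<Rightarrow> ('v, 'x) lstate"  (* Ds agent time state *)

record ('e, 'v, 'x, 'm) failure_model =
  Le :: "'e set"
  Ie :: "'e set"
  de :: "'e \<Rightarrow> (nat \<Rightarrow> 'v act) \<Rightarrow> 'e"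
  Adv :: "('v, 'x, 'm) adversary set"

definition wf_env :: "('e, 'v, 'x, 'm) failure_model \<Rightarrow> bool" where
  "wf_env F \<longleftrightarrow> Ie F \<subseteq> Le F \<and> (\<forall>s\<in>Le F. \<forall>a. de F s a \<in> Le F)"

(* Crash_t: at most t agents crash; agent i crashing in round crk i + 1 *)
definition crash_adv :: "nat \<Rightarrow> nat \<Rightarrow> ('v, 'x, 'm) adversary set" where
  "crash_adv n t = {\<alpha>.
     (\<forall>k i j m. Dr \<alpha> k i j m = m) \<and>
     (\<exists>F crk J. F \<subseteq> agents n \<and> card F \<le> t \<and>
        (\<forall>i\<in>F. J i \<subseteq> agents n \<and>
           (\<forall>k' s. crk i \<le> k' \<longrightarrow> Ds \<alpha> i k' s = Crashed) \<and>
           (\<forall>k' s. k' < crk i \<longrightarrow> Ds \<alpha> i k' s = s) \<and>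
           (\<forall>j m. Dt \<alpha> (crk i) i j m = (if j \<in> J i then None else m)) \<and>
           (\<forall>k' j m. crk i < k' \<longrightarrow> Dt \<alpha> k' i j m = None) \<and>
           (\<forall>k' j m. k' < crk i \<longrightarrow> Dt \<alpha> k' i j m = m)) \<and>
        (\<forall>i\<in>agents n - F. (\<forall>k s. Ds \<alpha> i k s = s) \<and> (\<forall>k j m. Dt \<alpha> k i j m = m)))}"

type_synonym ('e, 'v, 'x, 'm) gstate =
  "('e \<times> ('v, 'x, 'm) adversary) \<times> (nat \<Rightarrow> ('v, 'x) lstate)"

type_synonym ('e, 'v, 'x, 'm) run = "nat \<Rightarrow> ('e, 'v, 'x, 'm) gstate"

definition step :: "nat \<Rightarrow> ('v, 'x, 'm) info_exchange \<Rightarrow> ('v, 'x) protocol \<Rightarrow>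
    ('e, 'v, 'x, 'm) failure_model \<Rightarrow> nat \<Rightarrow> ('e, 'v, 'x, 'm) gstate \<Rightarrow> ('e, 'v, 'x, 'm) gstate" where
  "step n E P F k g =
    (let se = fst (fst g); \<alpha> = snd (fst g); s = snd g;
         a = (\<lambda>i. if i \<in> agents n then P i (s i) else Noop);
         msg = (\<lambda>i j. mu E i (s i) (a i) j);
         msg' = (\<lambda>i j. Dr \<alpha> k i j (Dt \<alpha> k i j (msg i j)));
         sstar = (\<lambda>j. dl E j (s j) (a j) (\<lambda>i. if i \<in> agents n then msg' i j else None));
         s' = (\<lambda>j. if j \<in> agents n then Ds \<alpha> j k (sstar j) else Crashed)
     in ((de F se a, \<alpha>), s'))"

definition runs :: "nat \<Rightarrow> ('v, 'x) protocol \<Rightarrow> ('v, 'x, 'm) info_exchange \<Rightarrow>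
    ('e, 'v, 'x, 'm) failure_model \<Rightarrow> ('e, 'v, 'x, 'm) run set" where
  "runs n P E F = {r. \<exists>se\<in>Ie F. \<exists>\<alpha>\<in>Adv F. \<exists>s.
       (\<forall>i\<in>agents n. s i \<in> Is E i) \<and> (\<forall>i. i \<notin> agents n \<longrightarrow> s i = Crashed) \<and>
       r 0 = ((se, \<alpha>), s) \<and> (\<forall>k. r (Suc k) = step n E P F k (r k))}"

definition loc :: "('e, 'v, 'x, 'm) run \<Rightarrow> nat \<Rightarrow> nat \<Rightarrow> ('v, 'x) lstate" where
  "loc r i m = snd (r m) i"

definition adv_of :: "('e, 'v, 'x, 'm) run \<Rightarrow> ('v, 'x, 'm) adversary" where
  "adv_of r = snd (fst (r 0))"

(* agent i has a fault in round k+1 *)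
definition fault_in_round :: "nat \<Rightarrow> ('v, 'x, 'm) adversary \<Rightarrow> nat \<Rightarrow> nat \<Rightarrow> bool" where
  "fault_in_round n \<alpha> i k \<longleftrightarrow>
     (\<exists>j\<in>agents n. \<exists>m. Dt \<alpha> k i j m \<noteq> m) \<or>
     (\<exists>j\<in>agents n. \<exists>m. Dr \<alpha> k j i m \<noteq> m) \<or>
     (\<exists>s. Ds \<alpha> i k s \<noteq> s)"

type_synonym ('e, 'v, 'x, 'm) formula = "('e, 'v, 'x, 'm) run \<Rightarrow> nat \<Rightarrow> bool"
type_synonym ('e, 'v, 'x, 'm) indexical = "('e, 'v, 'x, 'm) run \<Rightarrow> nat \<Rightarrow> nat set"

definition Nonfaulty :: "nat \<Rightarrow> ('e, 'v, 'x, 'm) indexical" where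
  "Nonfaulty n r m = {i\<in>agents n. \<forall>k. \<not> fault_in_round n (adv_of r) i k}"

definition Active :: "nat \<Rightarrow> ('e, 'v, 'x, 'm) indexical" where
  "Active n r m = {i\<in>agents n. \<forall>k<m. \<not> fault_in_round n (adv_of r) i k}"

definition decides :: "('v, 'x) protocol \<Rightarrow> nat \<Rightarrow> 'v \<Rightarrow> ('e, 'v, 'x, 'm) formula" where
  "decides P i v r m \<longleftrightarrow> P i (loc r i m) = Decide v"

definition decides_set :: "('v, 'x) protocol \<Rightarrow> ('e, 'v, 'x, 'm) indexical \<Rightarrow> 'v \<Rightarrow> ('e, 'v, 'x, 'm) formula" where
  "decides_set P S v r m \<longleftrightarrow> (\<forall>i\<in>S r m. decides P i v r m)"

definition exists_val :: "nat \<Rightarrow> 'v \<Rightarrow> ('e, 'v, 'x, 'm) formula" where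
  "exists_val n v r m \<longleftrightarrow> (\<exists>i\<in>agents n. \<exists>tm x. loc r i 0 = St v tm x)"

definition imp :: "('e, 'v, 'x, 'm) formula \<Rightarrow> ('e, 'v, 'x, 'm) formula \<Rightarrow> ('e, 'v, 'x, 'm) formula" where
  "imp \<phi> \<psi> r m \<longleftrightarrow> (\<phi> r m \<longrightarrow> \<psi> r m)"

definition Kn :: "('e, 'v, 'x, 'm) run set \<Rightarrow> nat \<Rightarrow> ('e, 'v, 'x, 'm) formula \<Rightarrow> ('e, 'v, 'x, 'm) formula" where
  "Kn R i \<phi> r m \<longleftrightarrow> (\<forall>r'\<in>R. \<forall>m'. loc r' i m' = loc r i m \<longrightarrow> \<phi> r' m')"

definition Ev :: "('e, 'v, 'x, 'm) run set \<Rightarrow> ('e, 'v, 'x, 'm) indexical \<Rightarrow> ('e, 'v, 'x, 'm) formula \<Rightarrow> ('e, 'v, 'x, 'm) formula" where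
  "Ev R S \<phi> r m \<longleftrightarrow> (\<forall>i\<in>S r m. Kn R i \<phi> r m)"

definition Ck :: "('e, 'v, 'x, 'm) run set \<Rightarrow> ('e, 'v, 'x, 'm) indexical \<Rightarrow> ('e, 'v, 'x, 'm) formula \<Rightarrow> ('e, 'v, 'x, 'm) formula" where
  "Ck R S \<phi> r m \<longleftrightarrow> (\<forall>k\<ge>1. ((Ev R S) ^^ k) \<phi> r m)"

definition valid_in :: "('e, 'v, 'x, 'm) run set \<Rightarrow> ('e, 'v, 'x, 'm) formula \<Rightarrow> bool" where
  "valid_in R \<phi> \<longleftrightarrow> (\<forall>r\<in>R. \<forall>m. \<phi> r m)"

definition SBA_valid :: "nat \<Rightarrow> ('v, 'x) protocol \<Rightarrow> ('e, 'v, 'x, 'm) run set \<Rightarrow> ('e, 'v, 'x, 'm) indexical \<Rightarrow> bool" where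
  "SBA_valid n P R S \<longleftrightarrow> (\<forall>r\<in>R.
     (\<forall>i\<in>agents n. \<forall>m m' v v'. decides P i v r m \<longrightarrow> decides P i v' r m' \<longrightarrow> m = m') \<and>
     (\<forall>m. \<forall>i\<in>S r m. \<forall>v. decides P i v r m \<longrightarrow>
          (\<forall>j\<in>S r m. decides P j v r m) \<and> exists_val n v r m))"

end

(* Suppose agent j decides v at time m of a run r.  Heal the adversary of r: keep the
   crashes that occur in rounds 1..m and let every other agent behave correctly forever.
   This is again a Crash_t adversary, and the run it induces from the initial state of r
   coincides with r up to time m.  In it, j (which is not crashed at m, since crashed
   agents cannot decide) and every agent of A(r,m) are nonfaulty, so SBA(N) makes them all
   decide v and v some initial preference; by the agreement at time m the same holds in r.
   Hence "some agent decides v" implies E_A of itself and of both target formulas, and the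
   induction rule for common knowledge gives C_A. *)
theory Submission
  imports Defs
begin

lemma Ev_mono:
  assumes "Ev R S \<phi> r m" and "\<And>r m. r \<in> R \<Longrightarrow> \<phi> r m \<Longrightarrow> \<phi>' r m"
  shows "Ev R S \<phi>' r m"
  using assms unfolding Ev_def Kn_def by blast

lemma Ck_induct:
  assumes invariant: "\<And>r m. r \<in> R \<Longrightarrow> \<psi> r m \<Longrightarrow> Ev R S \<psi> r m"
    and implies: "\<And>r m. r \<in> R \<Longrightarrow> \<psi> r m \<Longrightarrow> \<phi> r m"
    and "r \<in> R" "\<psi> r m"
  shows "Ck R S \<phi> r m"
proof -
  have "(Ev R S ^^ k) \<phi> r m" if "r \<in> R" "\<psi> r m" for k r m
    using that
  proof (induction k arbitrary: r m)
    case 0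
    then show ?case using implies by simp
  next
    case (Suc k)
    have "Ev R S \<psi> r m" using invariant Suc.prems .
    then have "Ev R S ((Ev R S ^^ k) \<phi>) r m" by (rule Ev_mono) (use Suc.IH in blast)
    then show ?case by simp
  qed
  with assms(3,4) show ?thesis unfolding Ck_def by blast
qed

primrec run_from :: "nat \<Rightarrow> ('v, 'x, 'm) info_exchange \<Rightarrow> ('v, 'x) protocol \<Rightarrow>
    ('e, 'v, 'x, 'm) failure_model \<Rightarrow> ('e, 'v, 'x, 'm) gstate \<Rightarrow> ('e, 'v, 'x, 'm) run" where
  "run_from n E P F g 0 = g"
| "run_from n E P F g (Suc k) = step n E P F k (run_from n E P F g k)"

lemma runs_Suc: "r \<in> runs n P E F \<Longrightarrow> r (Suc k) = step n E P F k (r k)"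
  by (auto simp: runs_def)

lemma adv_of_runs:
  assumes "r \<in> runs n P E F"
  shows "snd (fst (r k)) = adv_of r"
proof (induction k)
  case 0
  then show ?case by (simp add: adv_of_def)
next
  case (Suc k)
  then show ?case using runs_Suc[OF assms] by (simp add: step_def Let_def)
qed

definition agree_in_round :: "nat \<Rightarrow> ('v, 'x, 'm) adversary \<Rightarrow> ('v, 'x, 'm) adversary \<Rightarrow> nat \<Rightarrow> bool" where
  "agree_in_round n \<alpha> \<beta> k \<longleftrightarrow>
     (\<forall>i\<in>agents n. \<forall>j x. Dt \<alpha> k i j x = Dt \<beta> k i j x) \<and>
     (\<forall>i j x. Dr \<alpha> k i j x = Dr \<beta> k i j x) \<and>
     (\<forall>i\<in>agents n. \<forall>x. Ds \<alpha> i k x = Ds \<beta> i k x)"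

lemma step_agree_in_round:
  assumes "agree_in_round n \<alpha>' \<alpha> k"
  shows "step n E P F k ((e, \<alpha>'), s) =
           ((fst (fst (step n E P F k ((e, \<alpha>), s))), \<alpha>'), snd (step n E P F k ((e, \<alpha>), s)))"
  using assms unfolding agree_in_round_def by (simp add: step_def Let_def cong: if_cong)

lemma runs_change_adversary:
  assumes r: "r \<in> runs n P E F" and "\<alpha>' \<in> Adv F"
    and agree: "\<And>k. k < m \<Longrightarrow> agree_in_round n \<alpha>' (adv_of r) k"
  obtains r' where "r' \<in> runs n P E F" "adv_of r' = \<alpha>'" "\<And>i k. k \<le> m \<Longrightarrow> loc r' i k = loc r i k"
proof
  define r' where "r' = run_from n E P F ((fst (fst (r 0)), \<alpha>'), snd (r 0))"
  show "r' \<in> runs n P E F"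
    using r \<open>\<alpha>' \<in> Adv F\<close> by (auto simp: runs_def r'_def)
  show "adv_of r' = \<alpha>'" by (simp add: adv_of_def r'_def)
  have "r' k = ((fst (fst (r k)), \<alpha>'), snd (r k))" if "k \<le> m" for k
    using that
  proof (induction k)
    case 0
    then show ?case by (simp add: r'_def)
  next
    case (Suc k)
    have "k < m" using Suc.prems by simp
    have "r k = ((fst (fst (r k)), adv_of r), snd (r k))"
      using adv_of_runs[OF r] by (metis prod.collapse)
    then have r_Suc: "step n E P F k ((fst (fst (r k)), adv_of r), snd (r k)) = r (Suc k)"
      by (simp add: runs_Suc[OF r])
    have "r' (Suc k) = step n E P F k ((fst (fst (r k)), \<alpha>'), snd (r k))"
      using Suc by (simp add: r'_def)
    also have "\<dots> = ((fst (fst (r (Suc k))), \<alpha>'), snd (r (Suc k)))"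
      unfolding step_agree_in_round[OF agree[OF \<open>k < m\<close>]] r_Suc ..
    finally show ?case .
  qed
  then show "loc r' i k = loc r i k" if "k \<le> m" for i k
    using that by (simp add: loc_def)
qed

(* Ds \<alpha> i k acts in round k + 1, so this says that i crashes in one of the rounds 1..m. *)
definition crashed_by :: "('v, 'x, 'm) adversary \<Rightarrow> nat \<Rightarrow> nat \<Rightarrow> bool" where
  "crashed_by \<alpha> i m \<longleftrightarrow> (\<exists>k<m. \<forall>k'\<ge>k. \<forall>s. Ds \<alpha> i k' s = Crashed)"

lemma loc_Crashed_if_crashed_by:
  assumes r: "r \<in> runs n P E F" and "i \<in> agents n" and "crashed_by (adv_of r) i m"
  shows "loc r i m = Crashed"
proof -
  obtain k where "k < m" and crashed: "\<And>k' s. k \<le> k' \<Longrightarrow> Ds (adv_of r) i k' s = Crashed"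
    using assms(3) unfolding crashed_by_def by blast
  then obtain m0 where m: "m = Suc m0" and "k \<le> m0" by (cases m) auto
  show ?thesis
    using \<open>i \<in> agents n\<close> crashed[OF \<open>k \<le> m0\<close>]
    by (simp add: loc_def m runs_Suc[OF r] step_def Let_def adv_of_runs[OF r])
qed

lemma not_crashed_by_if_Active:
  assumes "i \<in> Active n r m"
  shows "\<not> crashed_by (adv_of r) i m"
proof
  assume "crashed_by (adv_of r) i m"
  then obtain k where "k < m" "Ds (adv_of r) i k (St undefined undefined undefined) = Crashed"
    unfolding crashed_by_def by blast
  then have "fault_in_round n (adv_of r) i k" unfolding fault_in_round_def by (metis lstate.distinct(1))
  with \<open>k < m\<close> assms show False by (simp add: Active_def)
qed

definition restrict_faults :: "nat set \<Rightarrow> ('v, 'x, 'm) adversary \<Rightarrow> ('v, 'x, 'm) adversary" where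
  "restrict_faults K \<alpha> =
     \<lparr>Dt = (\<lambda>k i j x. if i \<in> K then Dt \<alpha> k i j x else x), Dr = Dr \<alpha>,
      Ds = (\<lambda>i k x. if i \<in> K then Ds \<alpha> i k x else x)\<rparr>"

lemma crash_adv_heal:
  assumes "\<alpha> \<in> crash_adv n t"
  obtains \<alpha>' where "\<alpha>' \<in> crash_adv n t"
    and "\<And>k. k < m \<Longrightarrow> agree_in_round n \<alpha>' \<alpha> k"
    and "\<And>i k. \<not> crashed_by \<alpha> i m \<Longrightarrow> \<not> fault_in_round n \<alpha>' i k"
proof -
  obtain Fs crk J where Dr_id: "\<forall>k i j x. Dr \<alpha> k i j x = x"
    and Fs: "Fs \<subseteq> agents n" "card Fs \<le> t"
    and crashing: "\<forall>i\<in>Fs. J i \<subseteq> agents n \<and>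
           (\<forall>k' s. crk i \<le> k' \<longrightarrow> Ds \<alpha> i k' s = Crashed) \<and>
           (\<forall>k' s. k' < crk i \<longrightarrow> Ds \<alpha> i k' s = s) \<and>
           (\<forall>j x. Dt \<alpha> (crk i) i j x = (if j \<in> J i then None else x)) \<and>
           (\<forall>k' j x. crk i < k' \<longrightarrow> Dt \<alpha> k' i j x = None) \<and>
           (\<forall>k' j x. k' < crk i \<longrightarrow> Dt \<alpha> k' i j x = x)"
    and correct: "\<forall>i\<in>agents n - Fs. (\<forall>k s. Ds \<alpha> i k s = s) \<and> (\<forall>k j x. Dt \<alpha> k i j x = x)"
    using assms unfolding crash_adv_def mem_Collect_eq by (elim exE conjE) (rule that; assumption)
  define K where "K = {i\<in>Fs. crk i < m}"
  have correct_before_m: "Dt \<alpha> k i j x = x \<and> Ds \<alpha> i k s = s"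
    if "i \<in> agents n" "i \<notin> K" "k < m" for i k j x s
  proof (cases "i \<in> Fs")
    case True
    with that have "k < crk i" by (simp add: K_def)
    with True crashing show ?thesis by blast
  next
    case False
    with that correct show ?thesis by blast
  qed
  show thesis
  proof
    have "card K \<le> card Fs"
      using finite_subset[OF Fs(1)] by (intro card_mono) (auto simp: K_def agents_def)
    moreover have "\<forall>i\<in>K. J i \<subseteq> agents n \<and>
           (\<forall>k' s. crk i \<le> k' \<longrightarrow> Ds (restrict_faults K \<alpha>) i k' s = Crashed) \<and>
           (\<forall>k' s. k' < crk i \<longrightarrow> Ds (restrict_faults K \<alpha>) i k' s = s) \<and>
           (\<forall>j x. Dt (restrict_faults K \<alpha>) (crk i) i j x = (if j \<in> J i then None else x)) \<and>
           (\<forall>k' j x. crk i < k' \<longrightarrow> Dt (restrict_faults K \<alpha>) k' i j x = None) \<and>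
           (\<forall>k' j x. k' < crk i \<longrightarrow> Dt (restrict_faults K \<alpha>) k' i j x = x)"
      using crashing by (simp add: restrict_faults_def K_def)
    moreover have "\<forall>i\<in>agents n - K. (\<forall>k s. Ds (restrict_faults K \<alpha>) i k s = s) \<and>
                                   (\<forall>k j x. Dt (restrict_faults K \<alpha>) k i j x = x)"
      by (simp add: restrict_faults_def)
    ultimately show "restrict_faults K \<alpha> \<in> crash_adv n t"
      unfolding crash_adv_def using Fs Dr_id
      by (intro CollectI conjI exI[of _ K] exI[of _ crk] exI[of _ J])
         (auto simp: K_def restrict_faults_def)
    show "agree_in_round n (restrict_faults K \<alpha>) \<alpha> k" if "k < m" for k
      using correct_before_m[OF _ _ that] by (simp add: agree_in_round_def restrict_faults_def)
    show "\<not> fault_in_round n (restrict_faults K \<alpha>) i k" if "\<not> crashed_by \<alpha> i m" for i k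
    proof -
      have "i \<notin> K" using that crashing unfolding crashed_by_def K_def by blast
      then show ?thesis by (simp add: fault_in_round_def restrict_faults_def Dr_id)
    qed
  qed
qed

lemma SBA_Nonfaulty_extends_to_Active:
  assumes "Adv F = crash_adv n t"
    and "hard_crash_protocol n P"
    and sba: "SBA_valid n P (runs n P E F) (Nonfaulty n)"
    and r: "r \<in> runs n P E F"
    and j: "j \<in> agents n" and dec: "decides P j v r m"
  shows "decides_set P (Active n) v r m \<and> exists_val n v r m"
proof -
  have "adv_of r \<in> Adv F"
    using r by (auto simp: runs_def adv_of_def)
  then obtain \<alpha>' where "\<alpha>' \<in> Adv F"
    and agree: "\<And>k. k < m \<Longrightarrow> agree_in_round n \<alpha>' (adv_of r) k"
    and healed: "\<And>i k. \<not> crashed_by (adv_of r) i m \<Longrightarrow> \<not> fault_in_round n \<alpha>' i k"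
    using crash_adv_heal \<open>Adv F = crash_adv n t\<close> by metis
  obtain r' where r': "r' \<in> runs n P E F" and "adv_of r' = \<alpha>'"
    and same_loc: "\<And>i k. k \<le> m \<Longrightarrow> loc r' i k = loc r i k"
    using runs_change_adversary[OF r \<open>\<alpha>' \<in> Adv F\<close> agree] by blast
  have nonfaulty: "i \<in> Nonfaulty n r' m" if "i \<in> agents n" "\<not> crashed_by (adv_of r) i m" for i
    using that healed \<open>adv_of r' = \<alpha>'\<close> by (simp add: Nonfaulty_def)
  have "loc r j m \<noteq> Crashed"
    using dec j \<open>hard_crash_protocol n P\<close> by (auto simp: decides_def hard_crash_protocol_def)
  then have "j \<in> Nonfaulty n r' m"
    using nonfaulty j loc_Crashed_if_crashed_by[OF r j] by blast
  moreover have "decides P j v r' m"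
    using dec same_loc by (simp add: decides_def)
  ultimately have agreement: "\<forall>i\<in>Nonfaulty n r' m. decides P i v r' m"
    and validity: "exists_val n v r' m"
    using sba r' unfolding SBA_valid_def by blast+
  have "decides P i v r m" if "i \<in> Active n r m" for i
  proof -
    have "i \<in> Nonfaulty n r' m"
      using that nonfaulty not_crashed_by_if_Active[OF that] by (simp add: Active_def)
    then show ?thesis using agreement same_loc[of m i] by (auto simp: decides_def)
  qed
  moreover have "exists_val n v r m"
    using validity same_loc[of 0] by (simp add: exists_val_def)
  ultimately show ?thesis by (simp add: decides_set_def)
qed

theorem proposition6:
  fixes n t :: nat
    and E :: "('v, 'x, 'm) info_exchange"
    and F :: "('e, 'v, 'x, 'm) failure_model"
    and P :: "('v, 'x) protocol"
  assumes "t < n"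
    and "wf_info_exchange n E"
    and "wf_env F"
    and "Adv F = crash_adv n t"
    and "hard_crash_protocol n P"
    and "SBA_valid n P (runs n P E F) (Nonfaulty n)"
  shows "\<forall>i\<in>agents n. \<forall>v.
           valid_in (runs n P E F)
             (imp (decides P i v) (Ck (runs n P E F) (Active n) (decides_set P (Active n) v))) \<and>
           valid_in (runs n P E F)
             (imp (decides P i v) (Ck (runs n P E F) (Active n) (exists_val n v)))"
proof (intro ballI allI conjI)
  fix i v
  assume "i \<in> agents n"
  let ?R = "runs n P E F"
  define someone_decides :: "('e, 'v, 'x, 'm) formula"
    where "someone_decides r m \<longleftrightarrow> (\<exists>j\<in>agents n. decides P j v r m)" for r m
  have spread: "decides_set P (Active n) v r m \<and> exists_val n v r m"
    if "r \<in> ?R" "someone_decides r m" for r m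
    using that SBA_Nonfaulty_extends_to_Active[OF assms(4-6)] by (auto simp: someone_decides_def)
  have "Ev ?R (Active n) someone_decides r m" if "r \<in> ?R" "someone_decides r m" for r m
    unfolding Ev_def Kn_def
  proof (intro ballI allI impI)
    fix a m' and r' :: "('e, 'v, 'x, 'm) run"
    assume a: "a \<in> Active n r m" and "loc r' a m' = loc r a m"
    then have "decides P a v r' m'"
      using spread[OF that] by (simp add: decides_set_def decides_def)
    with a show "someone_decides r' m'" by (auto simp: someone_decides_def Active_def)
  qed
  then have "Ck ?R (Active n) \<phi> r m"
    if "\<And>r m. r \<in> ?R \<Longrightarrow> someone_decides r m \<Longrightarrow> \<phi> r m" "r \<in> ?R" "decides P i v r m" for \<phi> r m
    using that \<open>i \<in> agents n\<close>
    by (intro Ck_induct[where \<psi> = someone_decides]) (auto simp: someone_decides_def)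
  with spread show "valid_in ?R (imp (decides P i v) (Ck ?R (Active n) (decides_set P (Active n) v)))"
    and "valid_in ?R (imp (decides P i v) (Ck ?R (Active n) (exists_val n v)))"
    by (auto simp: valid_in_def imp_def)
qed

end
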